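(* Let $n\ge4$ and consider $Sp(2n,\mathbb{C})$ with the root data described in the context. There exist no weights $\mu_0,\lambda_0$ with $\mu_0+\lambda_0=\rho_{\mathrm{nc}}-\rho_{\mathrm c}$ satisfying simultaneously: (a) $(\mu_0,\alpha)\ge0$ and $(\lambda_0,\alpha)\ge0$ for all $\alpha\in\Delta_+^{\mathrm c}$; and (b) for every $\beta\in\Delta_+^{\mathrm{nc},1}$ there is $\alpha_\beta\in\Delta_+^{\mathrm c}$ with $(\mu_0-\beta,\alpha_\beta)<0$, and for every $\gamma\in\Delta_+^{\mathrm{nc},2}$ there is $\alpha_\gamma\in\Delta_+^{\mathrm c}$ with $(\lambda_0-\gamma,\alpha_\gamma)<0$.
   Context: For $Sp(2n,\mathbb{C})$ with compact Cartan subgroup $T\cong U(1)^n$ of $Sp(2n,\mathbb{R})$, weights are integral combinations $\sum_{i=1}^n a_ie_i^*$ ($a_i\in\mathbb Z$) with inner product $(e_i^*,e_j^* )=\delta_{ij}$. Consider the positive system (defining the non-classical period domain for weight $2n-1$ Hodge structures with all Hodge numbers $1$) $\Delta_+=\Delta_+^{\mathrm c}\cup\Delta_+^{\mathrm{nc},1}\cup\Delta_+^{\mathrm{nc},2}$ with $\Delta_+^{\mathrm c}=\{(-1)^{i-1}(e_i^*-e_j^* ):1\le i<j\le n\}$, $\Delta_+^{\mathrm{nc},1}=\{e_i^*+e_j^*:1\le i\le j\le n,\ i\text{ odd}\}$, $\Delta_+^{\mathrm{nc},2}=\{-e_i^*-e_j^*:1\le i\le j\le n,\ i\text{ even}\}$,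 and $\Delta_+^{\mathrm{nc}}=\{(-1)^{i-1}(e_i^*+e_j^* ):1\le i\le j\le n\}=\Delta_+^{\mathrm{nc},1}\cup\Delta_+^{\mathrm{nc},2}$. $\rho_{\mathrm c}$ and $\rho_{\mathrm{nc}}$ are half the sums of the roots in $\Delta_+^{\mathrm c}$ and $\Delta_+^{\mathrm{nc}}$. *)

theory Defs
  imports Complex_Main "HOL-Library.Function_Algebras"
begin

text \<open>Weights of Sp(2n,C) w.r.t. the compact Cartan T = U(1)^n: integral combinations
  sum_{i=1}^n a_i e_i^*, represented by their coefficient functions a :: nat => int,
  supported on the index set {1..n}.\<close>

type_synonym weight = "nat \<Rightarrow> int"

definition weights :: "nat \<Rightarrow> weight set" where
  "weights n = {a. \<forall>i. i \<notin> {1..n} \<longrightarrow> a i = 0}"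

definition ebasis :: "nat \<Rightarrow> weight" where
  "ebasis i = (\<lambda>k. if k = i then 1 else 0)"

definition ip :: "nat \<Rightarrow> weight \<Rightarrow> weight \<Rightarrow> int" where
  "ip n a b = (\<Sum>i=1..n. a i * b i)"

definition pos_compact :: "nat \<Rightarrow> weight set" where
  "pos_compact n = {(\<lambda>k. (-1) ^ (i - 1) * (ebasis i k - ebasis j k)) | i j.
                     1 \<le> i \<and> i < j \<and> j \<le> n}"

definition pos_nc1 :: "nat \<Rightarrow> weight set" where
  "pos_nc1 n = {(\<lambda>k. ebasis i k + ebasis j k) | i j.
                 1 \<le> i \<and> i \<le> j \<and> j \<le> n \<and> odd i}"

definition pos_nc2 :: "nat \<Rightarrow> weight set" where
  "pos_nc2 n = {(\<lambda>k. - (ebasis i k + ebasis j k)) | i j.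
                 1 \<le> i \<and> i \<le> j \<and> j \<le> n \<and> even i}"

definition pos_nc :: "nat \<Rightarrow> weight set" where
  "pos_nc n = pos_nc1 n \<union> pos_nc2 n"

definition rho_c :: "nat \<Rightarrow> nat \<Rightarrow> rat" where
  "rho_c n = (\<lambda>k. (1/2) * (\<Sum>\<alpha>\<in>pos_compact n. of_int (\<alpha> k)))"

definition rho_nc :: "nat \<Rightarrow> nat \<Rightarrow> rat" where
  "rho_nc n = (\<lambda>k. (1/2) * (\<Sum>\<alpha>\<in>pos_nc n. of_int (\<alpha> k)))"

end

theory Submission
  imports Defs
begin

text \<open>
  Here rho_nc - rho_c is the sum of the e_k over the odd k, and dominance for the compact
  positive roots says that an odd coordinate is at least every later coordinate while an even
  coordinate is at most every later one. If both mu0 and lam0 = (rho_nc - rho_c) - mu0 are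
  dominant, this forces mu0 to be constant on the odd and on the even indices, the two constants
  differing by 0 or 1. In the first case lam0 - gamma stays dominant for
  gamma = -(e_(p-2) + e_p), p the largest even index (this needs n \<ge> 4); in the second case
  mu0 - beta stays dominant for beta = e_(q-2) + e_q, q the largest odd index. Either way
  condition (b) fails.
\<close>

definition compact_root :: "nat \<Rightarrow> nat \<Rightarrow> weight" where
  "compact_root i j = (\<lambda>k. (-1) ^ (i - 1) * (ebasis i k - ebasis j k))"

definition noncompact_root :: "nat \<Rightarrow> nat \<Rightarrow> weight" where
  "noncompact_root i j = (\<lambda>k. (-1) ^ (i - 1) * (ebasis i k + ebasis j k))"

lemma neg_one_power_pred: "1 \<le> i \<Longrightarrow> (-1::int) ^ (i - 1) = (if odd i then 1 else -1)"
  by (cases i) auto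

lemma pos_compact_eq:
  "pos_compact n = (\<lambda>(i, j). compact_root i j) ` {(i, j). 1 \<le> i \<and> i < j \<and> j \<le> n}"
  unfolding pos_compact_def compact_root_def by auto

lemma noncompact_root_odd: "odd i \<Longrightarrow> noncompact_root i j = (\<lambda>k. ebasis i k + ebasis j k)"
  unfolding noncompact_root_def by (simp add: neg_one_power_pred odd_pos)

lemma noncompact_root_even:
  "even i \<Longrightarrow> 1 \<le> i \<Longrightarrow> noncompact_root i j = (\<lambda>k. - (ebasis i k + ebasis j k))"
  unfolding noncompact_root_def by (simp add: neg_one_power_pred)

lemma pos_nc_eq:
  "pos_nc n = (\<lambda>(i, j). noncompact_root i j) ` {(i, j). 1 \<le> i \<and> i \<le> j \<and> j \<le> n}"
proof (intro equalityI subsetI)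
  fix \<alpha> assume "\<alpha> \<in> pos_nc n"
  then obtain i j where ij: "1 \<le> i" "i \<le> j" "j \<le> n" and
    "odd i \<and> \<alpha> = (\<lambda>k. ebasis i k + ebasis j k) \<or> even i \<and> \<alpha> = (\<lambda>k. - (ebasis i k + ebasis j k))"
    unfolding pos_nc_def pos_nc1_def pos_nc2_def by blast
  then have "\<alpha> = noncompact_root i j"
    using noncompact_root_odd noncompact_root_even by metis
  with ij show "\<alpha> \<in> (\<lambda>(i, j). noncompact_root i j) ` {(i, j). 1 \<le> i \<and> i \<le> j \<and> j \<le> n}"
    by auto
next
  fix \<alpha> assume "\<alpha> \<in> (\<lambda>(i, j). noncompact_root i j) ` {(i, j). 1 \<le> i \<and> i \<le> j \<and> j \<le> n}"
  then obtain i j where ij: "1 \<le> i" "i \<le> j" "j \<le> n" and \<alpha>: "\<alpha> = noncompact_root i j"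
    by auto
  show "\<alpha> \<in> pos_nc n"
  proof (cases "odd i")
    case True
    then show ?thesis
      unfolding pos_nc_def pos_nc1_def \<alpha> noncompact_root_odd[OF True] using ij by blast
  next
    case False
    then have "even i"
      by simp
    then show ?thesis
      unfolding pos_nc_def pos_nc2_def \<alpha> noncompact_root_even[OF \<open>even i\<close> ij(1)] using ij by blast
  qed
qed

lemma compact_root_nonzero_iff: "i \<noteq> j \<Longrightarrow> compact_root i j k \<noteq> 0 \<longleftrightarrow> k = i \<or> k = j"
  unfolding compact_root_def ebasis_def by auto

lemma noncompact_root_nonzero_iff: "noncompact_root i j k \<noteq> 0 \<longleftrightarrow> k = i \<or> k = j"
  unfolding noncompact_root_def ebasis_def by auto

lemma inj_on_compact_root: "inj_on (\<lambda>(i, j). compact_root i j) {(i, j). i < j}"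
proof (rule inj_onI, clarsimp)
  fix i j i' j' assume "compact_root i j = compact_root i' j'" and "i < j" "i' < j'"
  then have "\<forall>k. (k = i \<or> k = j) \<longleftrightarrow> (k = i' \<or> k = j')"
    using compact_root_nonzero_iff[of i j] compact_root_nonzero_iff[of i' j'] by (metis less_irrefl)
  with \<open>i < j\<close> \<open>i' < j'\<close> show "i = i' \<and> j = j'"
    by (metis not_less_iff_gr_or_eq)
qed

lemma inj_on_noncompact_root: "inj_on (\<lambda>(i, j). noncompact_root i j) {(i, j). i \<le> j}"
proof (rule inj_onI, clarsimp)
  fix i j i' j' assume "noncompact_root i j = noncompact_root i' j'" and "i \<le> j" "i' \<le> j'"
  then have "\<forall>k. (k = i \<or> k = j) \<longleftrightarrow> (k = i' \<or> k = j')"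
    using noncompact_root_nonzero_iff[of i j] noncompact_root_nonzero_iff[of i' j'] by metis
  with \<open>i \<le> j\<close> \<open>i' \<le> j'\<close> show "i = i' \<and> j = j'"
    by (metis le_antisym)
qed

lemma sum_pos_compact:
  "(\<Sum>\<alpha>\<in>pos_compact n. f \<alpha>) = (\<Sum>i=1..n. \<Sum>j\<in>{i<..n}. f (compact_root i j))"
proof -
  have idx: "{(i, j). 1 \<le> i \<and> i < j \<and> j \<le> n} = Sigma {1..n} (\<lambda>i. {i<..n})"
    by auto
  have "inj_on (\<lambda>(i, j). compact_root i j) (Sigma {1..n} (\<lambda>i. {i<..n}))"
    by (rule inj_on_subset[OF inj_on_compact_root]) auto
  then have "(\<Sum>\<alpha>\<in>pos_compact n. f \<alpha>) = (\<Sum>(i, j)\<in>Sigma {1..n} (\<lambda>i. {i<..n}). f (compact_root i j))"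
    unfolding pos_compact_eq idx by (rule sum.reindex_cong) auto
  also have "\<dots> = (\<Sum>i=1..n. \<Sum>j\<in>{i<..n}. f (compact_root i j))"
    by (rule sum.Sigma[symmetric]) auto
  finally show ?thesis .
qed

lemma sum_pos_nc:
  "(\<Sum>\<alpha>\<in>pos_nc n. f \<alpha>) = (\<Sum>i=1..n. \<Sum>j=i..n. f (noncompact_root i j))"
proof -
  have idx: "{(i, j). 1 \<le> i \<and> i \<le> j \<and> j \<le> n} = Sigma {1..n} (\<lambda>i. {i..n})"
    by auto
  have "inj_on (\<lambda>(i, j). noncompact_root i j) (Sigma {1..n} (\<lambda>i. {i..n}))"
    by (rule inj_on_subset[OF inj_on_noncompact_root]) auto
  then have "(\<Sum>\<alpha>\<in>pos_nc n. f \<alpha>) = (\<Sum>(i, j)\<in>Sigma {1..n} (\<lambda>i. {i..n}). f (noncompact_root i j))"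
    unfolding pos_nc_eq idx by (rule sum.reindex_cong) auto
  also have "\<dots> = (\<Sum>i=1..n. \<Sum>j=i..n. f (noncompact_root i j))"
    by (rule sum.Sigma[symmetric]) auto
  finally show ?thesis .
qed

lemma sum_alternating_signs: "(\<Sum>i=1..k. (-1::int) ^ (i - 1)) = of_bool (odd k)"
proof (induction k)
  case (Suc k)
  then show ?case by (simp add: neg_one_power_pred)
qed simp

lemma noncompact_minus_compact_row_sum:
  assumes "1 \<le> i" "i \<le> n" "k \<le> n"
  shows "(\<Sum>j=i..n. noncompact_root i j k) - (\<Sum>j\<in>{i<..n}. compact_root i j k)
    = 2 * (-1) ^ (i - 1) * of_bool (i \<le> k)"
proof -
  have "{i..n} = insert i {i<..n}"
    using assms by auto
  then have "(\<Sum>j=i..n. noncompact_root i j k) = noncompact_root i i k + (\<Sum>j\<in>{i<..n}. noncompact_root i j k)"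
    by simp
  moreover have "(\<Sum>j\<in>{i<..n}. noncompact_root i j k) - (\<Sum>j\<in>{i<..n}. compact_root i j k)
      = (\<Sum>j\<in>{i<..n}. 2 * (-1) ^ (i - 1) * of_bool (j = k))"
    unfolding sum_subtractf[symmetric]
    by (rule sum.cong) (auto simp: noncompact_root_def compact_root_def ebasis_def)
  moreover have "(\<Sum>j\<in>{i<..n}. 2 * (-1) ^ (i - 1) * of_bool (j = k)) = (2 * (-1) ^ (i - 1) * of_bool (i < k) :: int)"
    using assms by (simp add: sum_distrib_left[symmetric] sum.delta')
  moreover have "noncompact_root i i k = 2 * (-1) ^ (i - 1) * of_bool (i = k)"
    by (simp add: noncompact_root_def ebasis_def)
  moreover have "of_bool (i = k) + of_bool (i < k) = (of_bool (i \<le> k) :: int)"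
    by auto
  ultimately show ?thesis
    by (simp add: algebra_simps)
qed

lemma rho_nc_minus_rho_c:
  assumes "k \<le> n"
  shows "rho_nc n k - rho_c n k = of_bool (odd k)"
proof -
  have "(\<Sum>\<alpha>\<in>pos_nc n. \<alpha> k) - (\<Sum>\<alpha>\<in>pos_compact n. \<alpha> k)
      = (\<Sum>i=1..n. (\<Sum>j=i..n. noncompact_root i j k) - (\<Sum>j\<in>{i<..n}. compact_root i j k))"
    unfolding sum_pos_nc sum_pos_compact sum_subtractf ..
  also have "\<dots> = (\<Sum>i=1..n. 2 * (-1) ^ (i - 1) * of_bool (i \<le> k))"
    using assms by (intro sum.cong refl noncompact_minus_compact_row_sum) auto
  also have "\<dots> = 2 * (\<Sum>i=1..k. (-1) ^ (i - 1))"
    unfolding sum_distrib_left using assms by (intro sum.mono_neutral_cong_right) auto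
  also have "\<dots> = 2 * of_bool (odd k)"
    by (simp only: sum_alternating_signs)
  finally have diff: "(\<Sum>\<alpha>\<in>pos_nc n. \<alpha> k) - (\<Sum>\<alpha>\<in>pos_compact n. \<alpha> k) = 2 * of_bool (odd k)" .
  have "rho_nc n k - rho_c n k = of_int ((\<Sum>\<alpha>\<in>pos_nc n. \<alpha> k) - (\<Sum>\<alpha>\<in>pos_compact n. \<alpha> k)) / 2"
    unfolding rho_nc_def rho_c_def by (simp add: of_int_sum)
  then show ?thesis
    unfolding diff by simp
qed

lemma ip_ebasis: "i \<in> {1..n} \<Longrightarrow> ip n w (ebasis i) = w i"
  unfolding ip_def ebasis_def by (simp add: if_distrib[of "\<lambda>x. w _ * x"] cong: if_cong)

lemma ip_compact_root:
  assumes "i \<in> {1..n}" "j \<in> {1..n}"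
  shows "ip n w (compact_root i j) = (-1) ^ (i - 1) * (w i - w j)"
proof -
  have "ip n w (compact_root i j) = (-1) ^ (i - 1) * (ip n w (ebasis i) - ip n w (ebasis j))"
    unfolding ip_def compact_root_def
    by (simp add: sum_subtractf[symmetric] sum_distrib_left algebra_simps)
  then show ?thesis
    using assms by (simp add: ip_ebasis)
qed

definition compact_dominant :: "nat \<Rightarrow> weight \<Rightarrow> bool" where
  "compact_dominant n w \<longleftrightarrow> (\<forall>\<alpha>\<in>pos_compact n. 0 \<le> ip n w \<alpha>)"

lemma compact_dominant_iff:
  "compact_dominant n w \<longleftrightarrow>
     (\<forall>i j. 1 \<le> i \<longrightarrow> i < j \<longrightarrow> j \<le> n \<longrightarrow> (if odd i then w j \<le> w i else w i \<le> w j))"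
proof -
  have "0 \<le> ip n w (compact_root i j) \<longleftrightarrow> (if odd i then w j \<le> w i else w i \<le> w j)"
    if "1 \<le> i" "i < j" "j \<le> n" for i j
    using that ip_compact_root[of i n j w] neg_one_power_pred[OF that(1)] by auto
  then show ?thesis
    unfolding compact_dominant_def pos_compact_eq by auto
qed

lemma compact_dominant_pair_cases:
  assumes mu: "compact_dominant n mu" and lam: "compact_dominant n lam" and "2 \<le> n"
    and sum: "\<And>k. k \<in> {1..n} \<Longrightarrow> mu k + lam k = of_bool (odd k)"
  shows "(\<forall>k\<in>{1..n}. lam k = of_bool (odd k) - mu 2) \<or>
    (\<forall>k\<in>{1..n}. mu k = mu 2 + of_bool (odd k))"
proof -
  note mu_le = mu[unfolded compact_dominant_iff, rule_format]
  note lam_le = lam[unfolded compact_dominant_iff, rule_format]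
  have lam_eq: "lam k = of_bool (odd k) - mu k" if "k \<in> {1..n}" for k
    using sum[OF that] by simp
  have mu_odd: "mu k = mu 1" if "odd k" "k \<in> {1..n}" for k
  proof (cases "k = 1")
    case False
    then show ?thesis
      using that mu_le[of 1 k] lam_le[of 1 k] lam_eq[of 1] lam_eq[of k] by auto
  qed simp
  have mu_even: "mu k = mu 2" if "even k" "k \<in> {1..n}" for k
  proof (cases "k = 2")
    case False
    then have "2 < k"
      using that by (auto elim: evenE)
    then show ?thesis
      using that mu_le[of 2 k] lam_le[of 2 k] lam_eq[of 2] lam_eq[of k] by auto
  qed simp
  have "mu 2 \<le> mu 1" "mu 1 \<le> mu 2 + 1"
    using mu_le[of 1 2] lam_le[of 1 2] lam_eq[of 1] lam_eq[of 2] \<open>2 \<le> n\<close> by auto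
  then consider "mu 1 = mu 2" | "mu 1 = mu 2 + 1"
    by linarith
  then show ?thesis
  proof cases
    case 1
    then show ?thesis
      using mu_odd mu_even lam_eq by (metis diff_zero)
  next
    case 2
    then show ?thesis
      using mu_odd mu_even by auto
  qed
qed

lemma compact_dominant_of_indicator:
  assumes "\<forall>k\<in>{1..n}. w k = c + of_bool (k \<in> S)"
    and "\<And>i j. 1 \<le> i \<Longrightarrow> i < j \<Longrightarrow> j \<le> n \<Longrightarrow> odd i \<Longrightarrow> j \<in> S \<Longrightarrow> i \<in> S"
    and "\<And>i j. 1 \<le> i \<Longrightarrow> i < j \<Longrightarrow> j \<le> n \<Longrightarrow> even i \<Longrightarrow> i \<in> S \<Longrightarrow> j \<in> S"
  shows "compact_dominant n w"
  unfolding compact_dominant_iff using assms by fastforce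

lemma exists_pos_nc1_dominant_shift:
  assumes "3 \<le> n" and mu: "\<forall>k\<in>{1..n}. mu k = c + of_bool (odd k)"
  shows "\<exists>\<beta>\<in>pos_nc1 n. compact_dominant n (mu - \<beta>)"
proof -
  define q where "q = 2 * ((n - 1) div 2) + 1"
  have q: "odd q" "3 \<le> q" "q \<le> n" "n \<le> q + 1"
    using assms unfolding q_def by auto
  define \<beta> where "\<beta> = (\<lambda>k. ebasis (q - 2) k + ebasis q k)"
  have "\<beta> \<in> pos_nc1 n"
    unfolding pos_nc1_def \<beta>_def using q by (intro CollectI exI[of _ "q - 2"] exI[of _ q]) auto
  moreover have "compact_dominant n (mu - \<beta>)"
  proof (rule compact_dominant_of_indicator)
    show "\<forall>k\<in>{1..n}. (mu - \<beta>) k = c + of_bool (k \<in> {k. odd k \<and> k \<noteq> q - 2 \<and> k \<noteq> q})"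
      using mu q by (auto simp: \<beta>_def ebasis_def)
  qed (use q in \<open>simp; presburger\<close>)+
  ultimately show ?thesis
    by blast
qed

lemma exists_pos_nc2_dominant_shift:
  assumes "4 \<le> n" and lam: "\<forall>k\<in>{1..n}. lam k = of_bool (odd k) - c"
  shows "\<exists>\<gamma>\<in>pos_nc2 n. compact_dominant n (lam - \<gamma>)"
proof -
  define p where "p = 2 * (n div 2)"
  have p: "even p" "4 \<le> p" "p \<le> n" "n \<le> p + 1"
    using assms unfolding p_def by auto
  define \<gamma> where "\<gamma> = (\<lambda>k. - (ebasis (p - 2) k + ebasis p k))"
  have "\<gamma> \<in> pos_nc2 n"
    unfolding pos_nc2_def \<gamma>_def using p by (intro CollectI exI[of _ "p - 2"] exI[of _ p]) auto
  moreover have "compact_dominant n (lam - \<gamma>)"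
  proof (rule compact_dominant_of_indicator)
    show "\<forall>k\<in>{1..n}. (lam - \<gamma>) k = - c + of_bool (k \<in> {k. odd k \<or> k = p - 2 \<or> k = p})"
      using lam p by (auto simp: \<gamma>_def ebasis_def)
  qed (use p in \<open>simp; presburger\<close>)+
  ultimately show ?thesis
    by blast
qed

lemma compact_dominant_pair_has_dominant_shift:
  assumes "4 \<le> n" and "compact_dominant n mu" "compact_dominant n lam"
    and "\<And>k. k \<in> {1..n} \<Longrightarrow> mu k + lam k = of_bool (odd k)"
  shows "(\<exists>\<beta>\<in>pos_nc1 n. compact_dominant n (mu - \<beta>)) \<or>
    (\<exists>\<gamma>\<in>pos_nc2 n. compact_dominant n (lam - \<gamma>))"
proof -
  have "2 \<le> n" "3 \<le> n"
    using assms(1) by simp_all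
  from assms(2,3) \<open>2 \<le> n\<close> assms(4)
  have "(\<forall>k\<in>{1..n}. lam k = of_bool (odd k) - mu 2) \<or>
    (\<forall>k\<in>{1..n}. mu k = mu 2 + of_bool (odd k))"
    by (rule compact_dominant_pair_cases)
  then show ?thesis
  proof
    assume "\<forall>k\<in>{1..n}. lam k = of_bool (odd k) - mu 2"
    with assms(1) show ?thesis
      by (blast intro: exists_pos_nc2_dominant_shift)
  next
    assume "\<forall>k\<in>{1..n}. mu k = mu 2 + of_bool (odd k)"
    with \<open>3 \<le> n\<close> show ?thesis
      by (blast intro: exists_pos_nc1_dominant_shift)
  qed
qed

theorem proposition6p7:
  fixes n :: nat
  assumes "n \<ge> 4"
  shows "\<not> (\<exists>mu0 lam0. mu0 \<in> weights n \<and> lam0 \<in> weights n \<and>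
            (\<lambda>k. of_int (mu0 k + lam0 k)) = (\<lambda>k. rho_nc n k - rho_c n k) \<and>
            (\<forall>\<alpha>\<in>pos_compact n. ip n mu0 \<alpha> \<ge> 0 \<and> ip n lam0 \<alpha> \<ge> 0) \<and>
            (\<forall>\<beta>\<in>pos_nc1 n. \<exists>\<alpha>\<in>pos_compact n. ip n (mu0 - \<beta>) \<alpha> < 0) \<and>
            (\<forall>\<gamma>\<in>pos_nc2 n. \<exists>\<alpha>\<in>pos_compact n. ip n (lam0 - \<gamma>) \<alpha> < 0))"
proof -
  have False
    if sum: "(\<lambda>k. of_int (mu k + lam k)) = (\<lambda>k. rho_nc n k - rho_c n k)"
      and dom: "\<forall>\<alpha>\<in>pos_compact n. ip n mu \<alpha> \<ge> 0 \<and> ip n lam \<alpha> \<ge> 0"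
      and nc1: "\<forall>\<beta>\<in>pos_nc1 n. \<exists>\<alpha>\<in>pos_compact n. ip n (mu - \<beta>) \<alpha> < 0"
      and nc2: "\<forall>\<gamma>\<in>pos_nc2 n. \<exists>\<alpha>\<in>pos_compact n. ip n (lam - \<gamma>) \<alpha> < 0"
    for mu lam
  proof -
    have "compact_dominant n mu" "compact_dominant n lam"
      using dom unfolding compact_dominant_def by auto
    moreover have "mu k + lam k = of_bool (odd k)" if "k \<in> {1..n}" for k
    proof -
      have "(of_int (mu k + lam k) :: rat) = of_int (of_bool (odd k))"
        using fun_cong[OF sum, of k] rho_nc_minus_rho_c[of k n] that by simp
      then show ?thesis
        by (simp only: of_int_eq_iff)
    qed
    ultimately have "(\<exists>\<beta>\<in>pos_nc1 n. compact_dominant n (mu - \<beta>)) \<or>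
      (\<exists>\<gamma>\<in>pos_nc2 n. compact_dominant n (lam - \<gamma>))"
      using assms by (intro compact_dominant_pair_has_dominant_shift) auto
    with nc1 nc2 show False
      unfolding compact_dominant_def by (meson not_le)
  qed
  then show ?thesis
    by blast
qed

end
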